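(* Let $q>1$ be an integer and $\xi$ a nonzero rational number. Then the real number $E_q(\xi)$ is either irrational or zero. If moreover $|\xi|<1$, then the real number $E_{q^{-1}}(\xi)$ is irrational.
   Context: For $Q\in\mathbb{C}$ not a root of unity, $n_Q=\frac{1-Q^n}{1-Q}$, $n_Q!=\prod_{k=1}^nk_Q$, and $E_Q(z)=\sum_{n\ge0}z^n/n_Q!$. For $q>1$, $E_q$ is entire and $E_{q^{-1}}$ converges for $|z|<q/(q-1)$. *)

theory Defs
  imports Complex_Main
begin

definition qint :: "'a::field \<Rightarrow> nat \<Rightarrow> 'a" where
  "qint Q n = (1 - Q ^ n) / (1 - Q)"

definition qfact :: "'a::field \<Rightarrow> nat \<Rightarrow> 'a" where
  "qfact Q n = (\<Prod>k=1..n. qint Q k)"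

definition qexp :: "'a::real_normed_field \<Rightarrow> 'a \<Rightarrow> 'a" where
  "qexp Q z = (\<Sum>n. z ^ n / qfact Q n)"

end

(*
  Write e_Q(x) = sum_n x^n / (Q;Q)_n, so that E_Q(z) = e_Q((1 - Q) z) and e_Q(Q x) = (1 - x) e_Q(x).

  Let q >= 2 be an integer and x = a/b with 9 a^2 <= b. Weighting the N-th term of the
  series by P_n(q^N), where P_n(z) = prod_{j<n} (z - q^(n+1+j)), gives
  sum_N P_n(q^N) x^N / (q;q)_N = A_n(x) e_q(x), where b^n A_n(a/b) is an integer.
  Since (q;q)_N divides P_n(q^N), the terms with N <= n are integers after multiplication
  by b^n; the terms with n < N <= 2n vanish; and the tail from N = 2n+1 on is nonzero and
  at most 2 |x|^(2n+1). If e_q(x) = u/v, the tail times v b^n is thus a nonzero integer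
  of absolute value at most 2 v (b x^2)^n |x| < 1 for large n. Any nonzero rational
  reduces to this case through the functional equation, which only introduces the
  rational factor (x/q^m; q)_m.

  Finally e_{1/q}(y) e_q(q y) = 1, because the product is invariant under y -> y/q and
  continuous at 0. Hence if E_{1/q}(xi) were rational, E_q(-xi) would be a nonzero rational.
*)
theory Submission
  imports Defs "HOL-Computational_Algebra.Polynomial"
begin

section \<open>The Euler q-exponential\<close>

definition qpochhammer :: "'a::comm_ring_1 \<Rightarrow> 'a \<Rightarrow> nat \<Rightarrow> 'a" where
  "qpochhammer a Q n = (\<Prod>k<n. 1 - a * Q ^ k)"

lemma qpochhammer_0 [simp]: "qpochhammer a Q 0 = 1"
  by (simp add: qpochhammer_def)

lemma qpochhammer_Suc: "qpochhammer a Q (Suc n) = qpochhammer a Q n * (1 - a * Q ^ n)"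
  by (simp add: qpochhammer_def)

lemma qpochhammer_Suc_shift: "qpochhammer a Q (Suc n) = (1 - a) * qpochhammer (a * Q) Q n"
  unfolding qpochhammer_def prod.lessThan_Suc_shift by (simp add: mult.assoc)

lemma of_int_qpochhammer: "of_int (qpochhammer a Q n) = qpochhammer (of_int a) (of_int Q) n"
  by (simp add: qpochhammer_def of_int_prod)

lemma qpochhammer_self_nonzero:
  fixes Q :: real
  assumes "\<bar>Q\<bar> \<noteq> 1"
  shows "qpochhammer Q Q n \<noteq> 0"
  using assms power_eq_1_iff[of Q "Suc _"] by (auto simp: qpochhammer_def)

definition euler_qexp :: "real \<Rightarrow> real \<Rightarrow> real" where
  "euler_qexp Q x = (\<Sum>n. x ^ n / qpochhammer Q Q n)"

lemma qfact_eq_qpochhammer: "qfact Q n = qpochhammer Q Q n / (1 - Q) ^ n"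
proof -
  have "qfact Q n = (\<Prod>k<n. qint Q (Suc k))"
    unfolding qfact_def using prod.atLeast1_atMost_eq[of "qint Q" n] by simp
  then show ?thesis
    by (simp add: qint_def qpochhammer_def prod_dividef)
qed

lemma qexp_eq_euler_qexp: "qexp Q z = euler_qexp Q ((1 - Q) * z)"
  unfolding qexp_def euler_qexp_def qfact_eq_qpochhammer
  by (simp add: power_mult_distrib mult.commute)

lemma summable_euler_qexp_ratio:
  fixes Q x :: real
  assumes "((\<lambda>n. \<bar>x\<bar> / \<bar>1 - Q ^ Suc n\<bar>) \<longlongrightarrow> l) sequentially" and "l < 1"
  shows "summable (\<lambda>n. x ^ n / qpochhammer Q Q n)"
proof -
  define c where "c = (1 + l) / 2"
  have "c < 1" "l < c" using \<open>l < 1\<close> by (auto simp: c_def)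
  obtain N where N: "\<And>n. n \<ge> N \<Longrightarrow> \<bar>x\<bar> / \<bar>1 - Q ^ Suc n\<bar> < c"
    using order_tendstoD(2)[OF assms(1) \<open>l < c\<close>] by (auto simp: eventually_sequentially)
  show ?thesis
  proof (rule summable_ratio_test[OF \<open>c < 1\<close>])
    fix n assume "n \<ge> N"
    have "norm (x ^ Suc n / qpochhammer Q Q (Suc n))
          = \<bar>x\<bar> / \<bar>1 - Q ^ Suc n\<bar> * norm (x ^ n / qpochhammer Q Q n)"
      by (simp add: qpochhammer_Suc abs_mult power_abs mult_ac)
    also have "\<dots> \<le> c * norm (x ^ n / qpochhammer Q Q n)"
      using N[OF \<open>n \<ge> N\<close>] by (intro mult_right_mono) auto
    finally show "norm (x ^ Suc n / qpochhammer Q Q (Suc n)) \<le> c * norm (x ^ n / qpochhammer Q Q n)" .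
  qed
qed

lemma summable_euler_qexp_gt1:
  fixes Q x :: real
  assumes "\<bar>Q\<bar> > 1"
  shows "summable (\<lambda>n. x ^ n / qpochhammer Q Q n)"
proof (rule summable_euler_qexp_ratio)
  have "filterlim (\<lambda>n. Q ^ Suc n) at_infinity sequentially"
    using filterlim_sequentially_Suc[of "\<lambda>n. Q ^ n"] filterlim_realpow_sequentially_gt1[of Q] assms
    by simp
  then have "filterlim (\<lambda>n. Q ^ Suc n + - 1) at_infinity sequentially"
    by (rule tendsto_add_filterlim_at_infinity'[OF _ tendsto_const])
  then have "filterlim (\<lambda>n. norm (Q ^ Suc n + - 1)) at_top sequentially"
    by (rule filterlim_at_infinity_imp_norm_at_top)
  then have "filterlim (\<lambda>n. \<bar>1 - Q ^ Suc n\<bar>) at_infinity sequentially"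
    by (intro filterlim_at_top_imp_at_infinity) (simp add: abs_minus_commute)
  then show "((\<lambda>n. \<bar>x\<bar> / \<bar>1 - Q ^ Suc n\<bar>) \<longlongrightarrow> 0) sequentially"
    by (rule tendsto_divide_0[OF tendsto_const])
qed simp

lemma summable_euler_qexp_lt1:
  fixes Q x :: real
  assumes "\<bar>Q\<bar> < 1" and "\<bar>x\<bar> < 1"
  shows "summable (\<lambda>n. x ^ n / qpochhammer Q Q n)"
proof (rule summable_euler_qexp_ratio)
  have "(\<lambda>n. Q ^ Suc n) \<longlonglongrightarrow> 0"
    by (intro LIMSEQ_Suc LIMSEQ_power_zero) (use assms(1) in simp)
  then show "((\<lambda>n. \<bar>x\<bar> / \<bar>1 - Q ^ Suc n\<bar>) \<longlongrightarrow> \<bar>x\<bar> / \<bar>1 - 0\<bar>) sequentially"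
    by (intro tendsto_intros) auto
qed (use assms(2) in simp)

lemma euler_qexp_q_difference:
  fixes Q x :: real
  assumes "\<bar>Q\<bar> \<noteq> 1"
    and "summable (\<lambda>n. x ^ n / qpochhammer Q Q n)"
    and "summable (\<lambda>n. (Q * x) ^ n / qpochhammer Q Q n)"
  shows "euler_qexp Q (Q * x) = (1 - x) * euler_qexp Q x"
proof -
  define d where "d n = x ^ n / qpochhammer Q Q n - (Q * x) ^ n / qpochhammer Q Q n" for n
  have "d (Suc n) = x * (x ^ n / qpochhammer Q Q n)" for n
  proof -
    have "1 - Q ^ Suc n \<noteq> 0"
      using assms(1) power_eq_1_iff[of Q "Suc n"] by auto
    have "d (Suc n) = x ^ Suc n * (1 - Q ^ Suc n) / (qpochhammer Q Q n * (1 - Q ^ Suc n))"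
      by (simp add: d_def qpochhammer_Suc power_mult_distrib diff_divide_distrib right_diff_distrib)
    also have "\<dots> = x * (x ^ n / qpochhammer Q Q n)"
      using \<open>1 - Q ^ Suc n \<noteq> 0\<close> by simp
    finally show ?thesis .
  qed
  moreover have "(\<lambda>n. x * (x ^ n / qpochhammer Q Q n)) sums (x * euler_qexp Q x)"
    unfolding euler_qexp_def using assms(2) by (intro sums_mult summable_sums)
  ultimately have "(\<lambda>n. d (Suc n)) sums (x * euler_qexp Q x)"
    by simp
  then have "d sums (x * euler_qexp Q x + d 0)"
    by (simp only: sums_Suc_iff)
  then have "d sums (x * euler_qexp Q x)"
    by (simp add: d_def)
  moreover have "d sums (euler_qexp Q x - euler_qexp Q (Q * x))"
    unfolding d_def euler_qexp_def using assms(2,3) by (intro sums_diff summable_sums)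
  ultimately have "x * euler_qexp Q x = euler_qexp Q x - euler_qexp Q (Q * x)"
    by (rule sums_unique2)
  then show ?thesis
    by (simp add: algebra_simps)
qed

lemma euler_qexp_q_difference_power:
  fixes Q x :: real
  assumes "\<bar>Q\<bar> > 1"
  shows "euler_qexp Q (Q ^ m * x) = qpochhammer x Q m * euler_qexp Q x"
proof (induction m)
  case (Suc m)
  have "euler_qexp Q (Q ^ Suc m * x) = euler_qexp Q (Q * (Q ^ m * x))"
    by (simp add: mult.assoc)
  also have "\<dots> = (1 - Q ^ m * x) * euler_qexp Q (Q ^ m * x)"
    using assms by (intro euler_qexp_q_difference summable_euler_qexp_gt1) auto
  finally show ?case
    using Suc by (simp add: qpochhammer_Suc mult_ac)
qed simp

lemma isCont_euler_qexp:
  fixes Q x z :: real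
  assumes "summable (\<lambda>n. z ^ n / qpochhammer Q Q n)" and "\<bar>x\<bar> < \<bar>z\<bar>"
  shows "isCont (euler_qexp Q) x"
proof -
  have "euler_qexp Q = (\<lambda>x. \<Sum>n. inverse (qpochhammer Q Q n) * x ^ n)"
    by (intro ext) (simp add: euler_qexp_def divide_inverse mult.commute)
  moreover have "summable (\<lambda>n. inverse (qpochhammer Q Q n) * z ^ n)"
    using assms(1) by (simp add: divide_inverse mult.commute)
  ultimately show ?thesis
    using isCont_powser assms(2) by (metis real_norm_def)
qed

lemma euler_qexp_0 [simp]: "euler_qexp Q 0 = 1"
  unfolding euler_qexp_def using powser_zero[of "\<lambda>n. inverse (qpochhammer Q Q n)"]
  by (simp add: divide_inverse mult.commute)

lemma euler_qexp_inverse_mult_shift: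
  fixes Q z :: real
  assumes "\<bar>Q\<bar> > 1" and "\<bar>z\<bar> < 1"
  shows "euler_qexp (inverse Q) (inverse Q * z) * euler_qexp Q (Q * (inverse Q * z))
       = euler_qexp (inverse Q) z * euler_qexp Q (Q * z)"
proof -
  have "\<bar>inverse Q\<bar> < 1"
    using assms(1) by (simp add: abs_inverse inverse_less_1_iff)
  moreover have "\<bar>inverse Q * z\<bar> \<le> \<bar>z\<bar>"
    using calculation by (simp add: abs_mult mult_left_le_one_le)
  ultimately have "euler_qexp (inverse Q) (inverse Q * z) = (1 - z) * euler_qexp (inverse Q) z"
    using assms(2) by (intro euler_qexp_q_difference summable_euler_qexp_lt1) auto
  moreover have "euler_qexp Q (Q * z) = (1 - z) * euler_qexp Q z"
    using assms(1) by (intro euler_qexp_q_difference summable_euler_qexp_gt1) auto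
  moreover have "Q * (inverse Q * z) = z"
    using assms(1) by (simp add: mult.assoc[symmetric])
  ultimately show ?thesis
    by (metis mult.assoc mult.commute)
qed

lemma euler_qexp_inverse_mult:
  fixes Q y :: real
  assumes "\<bar>Q\<bar> > 1" and "\<bar>y\<bar> < 1"
  shows "euler_qexp (inverse Q) y * euler_qexp Q (Q * y) = 1"
proof -
  define p where "p = inverse Q"
  have p: "\<bar>p\<bar> < 1"
    using assms(1) by (auto simp: p_def abs_inverse inverse_less_1_iff)
  define K where "K z = euler_qexp p z * euler_qexp Q (Q * z)" for z
  have K_step: "K (p * z) = K z" if "\<bar>z\<bar> < 1" for z
    using euler_qexp_inverse_mult_shift[OF assms(1) that] by (simp add: K_def p_def)
  have "\<bar>p ^ m * y\<bar> < 1" for m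
  proof -
    have "\<bar>p ^ m * y\<bar> \<le> \<bar>y\<bar>"
      using p by (simp add: abs_mult power_abs mult_left_le_one_le power_le_one)
    then show ?thesis using assms(2) by simp
  qed
  then have K_iterate: "K (p ^ m * y) = K y" for m
    by (induction m) (simp_all add: K_step mult.assoc)
  have "isCont (euler_qexp p) 0"
    using p by (intro isCont_euler_qexp[OF summable_euler_qexp_lt1[of p "1/2"]]) auto
  moreover have "isCont (euler_qexp Q) (Q * 0)"
    using assms(1) by (intro isCont_euler_qexp[OF summable_euler_qexp_gt1[of Q 1]]) auto
  ultimately have "isCont K 0"
    unfolding K_def[abs_def]
    by (intro isCont_mult isCont_o2[where f="\<lambda>z. Q * z" and g="euler_qexp Q"] continuous_intros)
  moreover have "(\<lambda>m. p ^ m * y) \<longlonglongrightarrow> 0"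
    using p by (intro tendsto_mult_left_zero LIMSEQ_power_zero) simp
  ultimately have "(\<lambda>m. K (p ^ m * y)) \<longlonglongrightarrow> K 0"
    by (rule isCont_tendsto_compose)
  then have "K y = K 0"
    by (simp add: K_iterate LIMSEQ_const_iff)
  then show ?thesis
    by (simp add: K_def p_def)
qed

lemma qexp_inverse_mult:
  fixes Q z :: real
  assumes "\<bar>Q\<bar> > 1" and "\<bar>(1 - inverse Q) * z\<bar> < 1"
  shows "qexp (inverse Q) z * qexp Q (- z) = 1"
proof -
  have "(1 - Q) * - z = Q * ((1 - inverse Q) * z)"
    using assms(1) by (auto simp: field_simps)
  then show ?thesis
    using euler_qexp_inverse_mult[OF assms] by (simp add: qexp_eq_euler_qexp)
qed

section \<open>Pade approximations\<close>

text \<open>Integrality of the Gaussian binomial coefficients, via the q-Pascal rule.\<close>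

lemma qpochhammer_dvd_qpochhammer_shift:
  "qpochhammer Q Q n dvd qpochhammer (Q ^ Suc r) Q n"
proof (induction n arbitrary: r)
  case 0
  show ?case by simp
next
  case (Suc n)
  note IH_n = Suc.IH
  show ?case
  proof (induction r)
    case 0
    show ?case by simp
  next
    case (Suc r)
    define a where "a = Q ^ Suc r"
    have a_Q: "Q ^ Suc (Suc r) = a * Q"
      by (simp add: a_def mult.commute)
    have "qpochhammer (a * Q) Q (Suc n)
          = qpochhammer (a * Q) Q n * (1 - Q ^ Suc n) + Q ^ Suc n * qpochhammer a Q (Suc n)"
      unfolding qpochhammer_Suc[of "a * Q"] qpochhammer_Suc_shift[of a] by (simp add: algebra_simps)
    moreover have "qpochhammer Q Q (Suc n) dvd qpochhammer (a * Q) Q n * (1 - Q ^ Suc n)"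
      using IH_n[of "Suc r"] unfolding a_Q by (simp add: qpochhammer_Suc mult_dvd_mono)
    moreover have "qpochhammer Q Q (Suc n) dvd Q ^ Suc n * qpochhammer a Q (Suc n)"
      using Suc.IH by (simp add: a_def)
    ultimately show ?case
      unfolding a_Q by (metis dvd_add)
  qed
qed

definition pade_poly :: "int \<Rightarrow> nat \<Rightarrow> int poly" where
  "pade_poly q n = (\<Prod>j<n. [:- (q ^ (n + 1 + j)), 1:])"

lemma poly_pade_poly: "poly (pade_poly q n) z = (\<Prod>j<n. z - q ^ (n + 1 + j))"
  by (simp add: pade_poly_def poly_prod)

lemma degree_pade_poly_le: "degree (pade_poly q n) \<le> n"
proof -
  have "degree (pade_poly q n) \<le> sum (degree \<circ> (\<lambda>j. [:- (q ^ (n + 1 + j)), 1:])) {..<n}"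
    unfolding pade_poly_def by (rule degree_prod_sum_le) simp
  then show ?thesis by simp
qed

lemma poly_pade_poly_eq_0:
  assumes "n < N" and "N \<le> 2 * n"
  shows "poly (pade_poly q n) (q ^ N) = 0"
proof -
  have "N - n - 1 \<in> {..<n}" and "n + 1 + (N - n - 1) = N"
    using assms by auto
  then show ?thesis
    unfolding poly_pade_poly by (metis (no_types, lifting) diff_self prod_zero_iff finite_lessThan)
qed

lemma qpochhammer_dvd_poly_pade_poly:
  assumes "N \<le> n"
  shows "qpochhammer q q N dvd poly (pade_poly q n) (q ^ N)"
proof -
  have "poly (pade_poly q n) (q ^ N) = (\<Prod>j<n. q ^ N * (1 - q ^ Suc (n - N) * q ^ j))"
    unfolding poly_pade_poly
  proof (intro prod.cong refl)
    fix j
    have "n + 1 + j = N + (Suc (n - N) + j)"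
      using assms by simp
    then have "q ^ (n + 1 + j) = q ^ N * (q ^ Suc (n - N) * q ^ j)"
      by (simp only: power_add)
    then show "q ^ N - q ^ (n + 1 + j) = q ^ N * (1 - q ^ Suc (n - N) * q ^ j)"
      by (simp only: right_diff_distrib mult_1_right)
  qed
  also have "\<dots> = (q ^ N) ^ n * qpochhammer (q ^ Suc (n - N)) q n"
    by (simp add: qpochhammer_def prod.distrib)
  finally have poly_eq: "poly (pade_poly q n) (q ^ N) = (q ^ N) ^ n * qpochhammer (q ^ Suc (n - N)) q n" .
  have "qpochhammer q q N dvd qpochhammer q q n"
    unfolding qpochhammer_def using assms by (intro prod_dvd_prod_subset) auto
  also have "\<dots> dvd qpochhammer (q ^ Suc (n - N)) q n"
    by (rule qpochhammer_dvd_qpochhammer_shift)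
  finally show ?thesis
    unfolding poly_eq by simp
qed

lemma Ints_power_mult_qpochhammer:
  fixes Q :: "'a::field_char_0"
  assumes "b \<noteq> 0" and "Q \<in> \<int>"
  shows "of_int b ^ i * qpochhammer (of_int a / of_int b) Q i \<in> \<int>"
proof -
  have "of_int b ^ i * qpochhammer (of_int a / of_int b) Q i
        = (\<Prod>k<i. of_int b * (1 - of_int a / of_int b * Q ^ k))"
    by (simp add: qpochhammer_def prod.distrib)
  also have "\<dots> = (\<Prod>k<i. of_int b - of_int a * Q ^ k)"
    using assms(1) by (intro prod.cong refl) (simp add: field_simps)
  also have "\<dots> \<in> \<int>"
    using assms(2) by (intro Ints_prod Ints_diff Ints_mult Ints_power) auto
  finally show ?thesis .
qed

lemma Ints_power_mult_poly_qpochhammer: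
  fixes P :: "int poly" and Q :: "'a::field_char_0"
  assumes "b \<noteq> 0" and "Q \<in> \<int>" and "degree P \<le> n"
  shows "of_int b ^ n * (\<Sum>i\<le>degree P. of_int (coeff P i) * qpochhammer (of_int a / of_int b) Q i) \<in> \<int>"
proof -
  have "of_int b ^ n * (\<Sum>i\<le>degree P. of_int (coeff P i) * qpochhammer (of_int a / of_int b) Q i)
        = (\<Sum>i\<le>degree P. of_int (coeff P i) * of_int b ^ (n - i)
             * (of_int b ^ i * qpochhammer (of_int a / of_int b) Q i))"
    unfolding sum_distrib_left
  proof (intro sum.cong refl)
    fix i assume "i \<in> {..degree P}"
    then have "of_int b ^ n = (of_int b ^ (n - i) * of_int b ^ i :: 'a)"
      using assms(3) by (simp flip: power_add)
    then show "of_int b ^ n * (of_int (coeff P i) * qpochhammer (of_int a / of_int b) Q i)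
        = of_int (coeff P i) * of_int b ^ (n - i) * (of_int b ^ i * qpochhammer (of_int a / of_int b) Q i)"
      by (simp add: mult_ac)
  qed
  also have "\<dots> \<in> \<int>"
  proof (rule Ints_sum)
    fix i
    have "of_int b ^ i * qpochhammer (of_int a / of_int b) Q i \<in> \<int>"
      by (rule Ints_power_mult_qpochhammer[OF assms(1,2)])
    then show "of_int (coeff P i) * of_int b ^ (n - i)
        * (of_int b ^ i * qpochhammer (of_int a / of_int b) Q i) \<in> \<int>"
      by (intro Ints_mult[OF Ints_mult[OF Ints_of_int Ints_power[OF Ints_of_int]]])
  qed
  finally show ?thesis .
qed

lemma euler_qexp_poly_sums:
  fixes P :: "int poly" and q :: int and x :: real
  assumes "\<bar>q\<bar> > 1"
  shows "(\<lambda>N. of_int (poly P (q ^ N)) * x ^ N / qpochhammer (of_int q) (of_int q) N) sums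
           ((\<Sum>i\<le>degree P. of_int (coeff P i) * qpochhammer x (of_int q) i) * euler_qexp (of_int q) x)"
proof -
  define Q where "Q = (of_int q :: real)"
  have Q: "\<bar>Q\<bar> > 1"
    using assms by (simp add: Q_def)
  have "of_int (poly P (q ^ N)) * x ^ N / qpochhammer Q Q N
        = (\<Sum>i\<le>degree P. of_int (coeff P i) * ((Q ^ i * x) ^ N / qpochhammer Q Q N))" for N
    by (simp add: Q_def poly_altdef of_int_sum sum_distrib_left sum_divide_distrib
        power_mult_distrib power_mult[symmetric] mult.commute mult.left_commute)
  moreover have "(\<lambda>N. \<Sum>i\<le>degree P. of_int (coeff P i) * ((Q ^ i * x) ^ N / qpochhammer Q Q N))
      sums (\<Sum>i\<le>degree P. of_int (coeff P i) * euler_qexp Q (Q ^ i * x))"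
    unfolding euler_qexp_def using Q by (intro sums_sum sums_mult summable_sums summable_euler_qexp_gt1)
  ultimately show ?thesis
    by (simp add: Q_def euler_qexp_q_difference_power[OF Q[unfolded Q_def]] sum_distrib_right mult.assoc)
qed

definition pade_term :: "int \<Rightarrow> nat \<Rightarrow> real \<Rightarrow> nat \<Rightarrow> real" where
  "pade_term q n x N = of_int (poly (pade_poly q n) (q ^ N)) * x ^ N / qpochhammer (of_int q) (of_int q) N"

definition pade_remainder :: "int \<Rightarrow> nat \<Rightarrow> real \<Rightarrow> real" where
  "pade_remainder q n x = (\<Sum>N. pade_term q n x (N + (2 * n + 1)))"

lemma pade_remainder_eq:
  assumes "\<bar>q\<bar> > 1"
  shows "pade_remainder q n x
    = (\<Sum>i\<le>degree (pade_poly q n). of_int (coeff (pade_poly q n) i) * qpochhammer x (of_int q) i)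
        * euler_qexp (of_int q) x - (\<Sum>N\<le>n. pade_term q n x N)"
proof -
  note sums = euler_qexp_poly_sums[OF assms, of "pade_poly q n" x, folded pade_term_def]
  have "(\<Sum>N<2 * n + 1. pade_term q n x N) = (\<Sum>N\<le>n. pade_term q n x N)"
    by (rule sum.mono_neutral_right) (auto simp: pade_term_def poly_pade_poly_eq_0)
  then show ?thesis
    using suminf_split_initial_segment[OF sums_summable[OF sums], of "2 * n + 1"] sums_unique[OF sums]
    by (simp add: pade_remainder_def)
qed

lemma Ints_power_mult_pade_term:
  assumes "\<bar>q\<bar> > 1" and "b \<noteq> 0" and "N \<le> n"
  shows "of_int b ^ n * pade_term q n (of_int a / of_int b) N \<in> \<int>"
proof -
  obtain d where d: "poly (pade_poly q n) (q ^ N) = qpochhammer q q N * d"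
    using qpochhammer_dvd_poly_pade_poly[OF assms(3)] by blast
  have "qpochhammer (of_int q) (of_int q) N \<noteq> (0::real)"
    using assms(1) by (intro qpochhammer_self_nonzero) simp
  then have "pade_term q n (of_int a / of_int b) N = of_int d * (of_int a / of_int b) ^ N"
    by (simp add: pade_term_def d of_int_qpochhammer)
  moreover have "of_int b ^ n = (of_int b ^ (n - N) * of_int b ^ N :: real)"
    using assms(3) by (simp flip: power_add)
  ultimately have "of_int b ^ n * pade_term q n (of_int a / of_int b) N = of_int (d * b ^ (n - N) * a ^ N)"
    using assms(2) by (simp add: power_divide)
  then show ?thesis
    by simp
qed

lemma Ints_pade_remainder:
  assumes "\<bar>q\<bar> > 1" and "b \<noteq> 0"
    and "of_int v * euler_qexp (of_int q) (of_int a / of_int b) \<in> \<int>"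
  shows "of_int v * of_int b ^ n * pade_remainder q n (of_int a / of_int b) \<in> \<int>"
proof -
  define x where "x = (of_int a / of_int b :: real)"
  define A where "A = (\<Sum>i\<le>degree (pade_poly q n). of_int (coeff (pade_poly q n) i) * qpochhammer x (of_int q) i)"
  have "of_int v * of_int b ^ n * pade_remainder q n x
        = (of_int b ^ n * A) * (of_int v * euler_qexp (of_int q) x)
          - of_int v * (\<Sum>N\<le>n. of_int b ^ n * pade_term q n x N)"
    unfolding pade_remainder_eq[OF assms(1)] A_def[symmetric] by (simp add: algebra_simps sum_distrib_left)
  also have "\<dots> \<in> \<int>"
  proof -
    have "of_int b ^ n * A \<in> \<int>"
      unfolding A_def x_def using assms(2) degree_pade_poly_le
      by (intro Ints_power_mult_poly_qpochhammer) auto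
    moreover have "of_int v * euler_qexp (of_int q) x \<in> \<int>"
      using assms(3) by (simp add: x_def)
    moreover have "(\<Sum>N\<le>n. of_int b ^ n * pade_term q n x N) \<in> \<int>"
      unfolding x_def using assms(1,2) by (intro Ints_sum Ints_power_mult_pade_term) auto
    ultimately show ?thesis
      by (simp add: Ints_diff Ints_mult)
  qed
  finally show ?thesis
    by (simp add: x_def)
qed

lemma abs_power_Suc_diff_le:
  fixes q :: "'a::linordered_idom"
  assumes "q \<ge> 2" and "s < N"
  shows "\<bar>q ^ Suc N - q ^ s\<bar> \<le> (q + 1) * \<bar>q ^ N - q ^ s\<bar>"
proof -
  have "q * q ^ s \<le> q ^ N"
    using assms power_increasing[of "Suc s" N q] by auto
  moreover have "q ^ s \<le> q * q ^ s" and "q ^ N \<le> q * q ^ N"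
    using assms(1) by simp_all
  ultimately have "\<bar>q ^ Suc N - q ^ s\<bar> = q * q ^ N - q ^ s" and "\<bar>q ^ N - q ^ s\<bar> = q ^ N - q ^ s"
    by simp_all
  with \<open>q * q ^ s \<le> q ^ N\<close> show ?thesis
    by (simp add: algebra_simps)
qed

lemma abs_poly_pade_poly_Suc_le:
  fixes q :: int
  assumes "q \<ge> 2" and "2 * n < N"
  shows "\<bar>poly (pade_poly q n) (q ^ Suc N)\<bar> \<le> (q ^ Suc N - 1) * \<bar>poly (pade_poly q n) (q ^ N)\<bar>"
proof -
  have "\<bar>poly (pade_poly q n) (q ^ Suc N)\<bar> = (\<Prod>j<n. \<bar>q ^ Suc N - q ^ (n + 1 + j)\<bar>)"
    by (simp add: poly_pade_poly abs_prod)
  also have "\<dots> \<le> (\<Prod>j<n. (q + 1) * \<bar>q ^ N - q ^ (n + 1 + j)\<bar>)"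
  proof (rule prod_mono)
    fix j assume "j \<in> {..<n}"
    then have "n + 1 + j < N"
      using assms(2) by simp
    then show "0 \<le> \<bar>q ^ Suc N - q ^ (n + 1 + j)\<bar>
        \<and> \<bar>q ^ Suc N - q ^ (n + 1 + j)\<bar> \<le> (q + 1) * \<bar>q ^ N - q ^ (n + 1 + j)\<bar>"
      using assms(1) by (intro conjI abs_ge_zero abs_power_Suc_diff_le)
  qed
  also have "\<dots> = (q + 1) ^ n * \<bar>poly (pade_poly q n) (q ^ N)\<bar>"
    by (simp add: poly_pade_poly abs_prod prod.distrib)
  also have "\<dots> \<le> (q ^ Suc N - 1) * \<bar>poly (pade_poly q n) (q ^ N)\<bar>"
  proof (rule mult_right_mono)
    have "(q + 1) ^ n \<le> (q ^ 2) ^ n"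
      using assms(1) by (intro power_mono) (auto simp: power2_eq_square intro: order.trans[of _ "2 * q"])
    also have "\<dots> \<le> q ^ N"
      using assms by (auto simp flip: power_mult intro: power_increasing)
    also have "\<dots> \<le> q ^ Suc N - 1"
    proof -
      have "1 \<le> q ^ N"
        using assms(1) by simp
      moreover have "2 * q ^ N \<le> q * q ^ N"
        using assms(1) by (intro mult_right_mono) auto
      ultimately show ?thesis
        by simp
    qed
    finally show "(q + 1) ^ n \<le> q ^ Suc N - 1" .
  qed simp
  finally show ?thesis .
qed

lemma prod_power_le_abs_qpochhammer:
  fixes q :: "'a::linordered_idom"
  assumes "q \<ge> 2"
  shows "(\<Prod>k<m. q ^ k) \<le> \<bar>qpochhammer q q m\<bar>"
proof -
  have "(\<Prod>k<m. q ^ k) \<le> (\<Prod>k<m. \<bar>1 - q * q ^ k\<bar>)"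
  proof (rule prod_mono)
    fix k
    have "1 \<le> q ^ k"
      using assms by (simp add: one_le_power)
    moreover have "2 * q ^ k \<le> q * q ^ k"
      using assms \<open>1 \<le> q ^ k\<close> by (intro mult_right_mono) auto
    ultimately show "0 \<le> q ^ k \<and> q ^ k \<le> \<bar>1 - q * q ^ k\<bar>"
      by linarith
  qed
  then show ?thesis
    by (simp only: qpochhammer_def abs_prod)
qed

lemma poly_pade_poly_first:
  fixes q :: int
  assumes "q \<ge> 2"
  shows "poly (pade_poly q n) (q ^ (2 * n + 1)) \<noteq> 0"
    and "\<bar>poly (pade_poly q n) (q ^ (2 * n + 1))\<bar> \<le> \<bar>qpochhammer q q (2 * n + 1)\<bar>"
proof -
  have factor: "0 < q ^ (2 * n + 1) - q ^ (n + 1 + j) \<and> q ^ (2 * n + 1) - q ^ (n + 1 + j) \<le> q ^ (2 * n + 1)"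
    if "j < n" for j
  proof -
    have "q ^ (n + 1 + j) < q ^ (2 * n + 1)"
      using that assms by (intro power_strict_increasing) auto
    then show ?thesis
      using assms by simp
  qed
  then have pos: "0 < poly (pade_poly q n) (q ^ (2 * n + 1))"
    unfolding poly_pade_poly by (intro prod_pos) simp
  then show "poly (pade_poly q n) (q ^ (2 * n + 1)) \<noteq> 0"
    by simp
  have "\<bar>poly (pade_poly q n) (q ^ (2 * n + 1))\<bar> = (\<Prod>j<n. q ^ (2 * n + 1) - q ^ (n + 1 + j))"
    using pos by (simp only: abs_of_pos poly_pade_poly)
  also have "\<dots> \<le> (\<Prod>j<n. q ^ (2 * n + 1))"
    using factor by (intro prod_mono) (simp add: less_imp_le)
  also have "\<dots> = (\<Prod>k<2 * n + 1. q ^ k)"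
  proof -
    have "(\<Sum>k<2 * n + 1. k) = (2 * n + 1) * n"
      by (induction n) (simp_all add: algebra_simps)
    then have "(\<Prod>k<2 * n + 1. q ^ k) = q ^ ((2 * n + 1) * n)"
      by (simp only: power_sum[symmetric])
    then show ?thesis
      by (simp only: prod_constant card_lessThan power_mult)
  qed
  also have "\<dots> \<le> \<bar>qpochhammer q q (2 * n + 1)\<bar>"
    using assms by (rule prod_power_le_abs_qpochhammer)
  finally show "\<bar>poly (pade_poly q n) (q ^ (2 * n + 1))\<bar> \<le> \<bar>qpochhammer q q (2 * n + 1)\<bar>" .
qed

lemma abs_pade_term_Suc_le:
  assumes "q \<ge> 2" and "2 * n < N"
  shows "\<bar>pade_term q n x (Suc N)\<bar> \<le> \<bar>x\<bar> * \<bar>pade_term q n x N\<bar>"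
proof -
  define Q where "Q = (of_int q :: real)"
  define c where "c = \<bar>x\<bar> ^ N / \<bar>qpochhammer Q Q N\<bar>"
  have "0 \<le> c"
    by (simp add: c_def)
  have "Q \<ge> 2"
    using assms(1) by (simp add: Q_def)
  moreover have "Q ^ 1 \<le> Q ^ Suc N"
    using \<open>Q \<ge> 2\<close> by (intro power_increasing) auto
  ultimately have "Q ^ Suc N \<ge> 2"
    by (simp only: power_one_right)
  then have den: "\<bar>1 - Q ^ Suc N\<bar> = Q ^ Suc N - 1"
    by simp
  have "real_of_int \<bar>poly (pade_poly q n) (q ^ Suc N)\<bar>
        \<le> real_of_int ((q ^ Suc N - 1) * \<bar>poly (pade_poly q n) (q ^ N)\<bar>)"
    by (simp only: of_int_le_iff abs_poly_pade_poly_Suc_le[OF assms])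
  then have growth: "\<bar>of_int (poly (pade_poly q n) (q ^ Suc N))\<bar>
        \<le> (Q ^ Suc N - 1) * \<bar>of_int (poly (pade_poly q n) (q ^ N))\<bar>"
    by (simp add: Q_def)
  have "\<bar>pade_term q n x (Suc N)\<bar> * (Q ^ Suc N - 1)
        = \<bar>of_int (poly (pade_poly q n) (q ^ Suc N))\<bar> * \<bar>x\<bar> * c"
    using \<open>Q ^ Suc N \<ge> 2\<close>
    by (simp add: pade_term_def qpochhammer_Suc abs_mult power_abs den c_def Q_def[symmetric])
  also have "\<dots> \<le> (Q ^ Suc N - 1) * \<bar>of_int (poly (pade_poly q n) (q ^ N))\<bar> * \<bar>x\<bar> * c"
    using growth \<open>0 \<le> c\<close> by (intro mult_right_mono) auto
  also have "\<dots> = (\<bar>x\<bar> * \<bar>pade_term q n x N\<bar>) * (Q ^ Suc N - 1)"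
    by (simp add: pade_term_def abs_mult power_abs c_def Q_def[symmetric])
  finally show ?thesis
    using \<open>Q ^ Suc N \<ge> 2\<close> by simp
qed

lemma pade_term_first:
  assumes "q \<ge> 2" and "x \<noteq> 0"
  shows "pade_term q n x (2 * n + 1) \<noteq> 0"
    and "\<bar>pade_term q n x (2 * n + 1)\<bar> \<le> \<bar>x\<bar> ^ (2 * n + 1)"
proof -
  define p where "p = poly (pade_poly q n) (q ^ (2 * n + 1))"
  define d where "d = qpochhammer q q (2 * n + 1)"
  have "p \<noteq> 0" and "\<bar>p\<bar> \<le> \<bar>d\<bar>"
    unfolding p_def d_def using poly_pade_poly_first[OF assms(1)] by auto
  have "d \<noteq> 0"
    using \<open>p \<noteq> 0\<close> \<open>\<bar>p\<bar> \<le> \<bar>d\<bar>\<close> by auto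
  have term_eq: "pade_term q n x (2 * n + 1) = of_int p / of_int d * x ^ (2 * n + 1)"
    by (simp add: pade_term_def p_def d_def of_int_qpochhammer)
  then show "pade_term q n x (2 * n + 1) \<noteq> 0"
    using \<open>p \<noteq> 0\<close> \<open>d \<noteq> 0\<close> assms(2) by simp
  have "\<bar>of_int p / of_int d :: real\<bar> \<le> 1"
    using \<open>\<bar>p\<bar> \<le> \<bar>d\<bar>\<close> \<open>d \<noteq> 0\<close> by (simp add: abs_div_pos divide_le_eq_1 flip: of_int_abs)
  then have "\<bar>of_int p / of_int d :: real\<bar> * \<bar>x\<bar> ^ (2 * n + 1) \<le> 1 * \<bar>x\<bar> ^ (2 * n + 1)"
    by (rule mult_right_mono) simp
  then show "\<bar>pade_term q n x (2 * n + 1)\<bar> \<le> \<bar>x\<bar> ^ (2 * n + 1)"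
    unfolding term_eq by (simp add: abs_mult power_abs)
qed

lemma suminf_ratio_bounded:
  fixes f :: "nat \<Rightarrow> real"
  assumes ratio: "\<And>k. \<bar>f (Suc k)\<bar> \<le> c * \<bar>f k\<bar>" and "c < 1 / 2" and "f 0 \<noteq> 0"
  shows "summable f" and "suminf f \<noteq> 0" and "\<bar>suminf f\<bar> \<le> 2 * \<bar>f 0\<bar>"
proof -
  have "0 \<le> c * \<bar>f 0\<bar>"
    using ratio[of 0] abs_ge_zero order_trans by blast
  then have "0 \<le> c"
    using assms(3) by (simp add: zero_le_mult_iff)
  have bound: "\<bar>f k\<bar> \<le> \<bar>f 0\<bar> * c ^ k" for k
  proof (induction k)
    case (Suc k)
    have "\<bar>f (Suc k)\<bar> \<le> c * \<bar>f k\<bar>"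
      by (rule ratio)
    also have "\<dots> \<le> c * (\<bar>f 0\<bar> * c ^ k)"
      using Suc.IH \<open>0 \<le> c\<close> by (rule mult_left_mono)
    finally show ?case
      by (simp add: mult_ac)
  qed simp
  have "(\<lambda>k. c * c ^ k) sums (c * (1 / (1 - c)))"
    using \<open>0 \<le> c\<close> \<open>c < 1 / 2\<close> by (intro sums_mult geometric_sums) simp
  then have geom: "(\<lambda>k. \<bar>f 0\<bar> * c ^ Suc k) sums (\<bar>f 0\<bar> * (c / (1 - c)))"
    using sums_mult by fastforce
  have tail_summable: "summable (\<lambda>k. \<bar>f (Suc k)\<bar>)"
    using bound[of "Suc _"] by (intro summable_comparison_test[OF _ sums_summable[OF geom]]) auto
  then show "summable f"
    by (metis summable_Suc_iff summable_rabs_cancel)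
  have "\<bar>\<Sum>k. f (Suc k)\<bar> \<le> (\<Sum>k. \<bar>f (Suc k)\<bar>)"
    using tail_summable by (rule summable_rabs)
  also have "\<dots> \<le> (\<Sum>k. \<bar>f 0\<bar> * c ^ Suc k)"
    using bound by (intro suminf_le tail_summable sums_summable[OF geom])
  also have "\<dots> = \<bar>f 0\<bar> * (c / (1 - c))"
    by (rule sums_unique[OF geom, symmetric])
  also have "\<dots> < \<bar>f 0\<bar>"
    using \<open>0 \<le> c\<close> \<open>c < 1 / 2\<close> assms(3) by (simp add: divide_less_eq)
  finally have tail: "\<bar>\<Sum>k. f (Suc k)\<bar> < \<bar>f 0\<bar>" .
  have "suminf f = f 0 + (\<Sum>k. f (Suc k))"
    using suminf_split_head[OF \<open>summable f\<close>] by simp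
  then show "suminf f \<noteq> 0" and "\<bar>suminf f\<bar> \<le> 2 * \<bar>f 0\<bar>"
    using tail by auto
qed

lemma pade_remainder_bounds:
  assumes "q \<ge> 2" and "x \<noteq> 0" and "\<bar>x\<bar> \<le> 1 / 3"
  shows "pade_remainder q n x \<noteq> 0" and "\<bar>pade_remainder q n x\<bar> \<le> 2 * \<bar>x\<bar> ^ (2 * n + 1)"
proof -
  define f where "f k = pade_term q n x (k + (2 * n + 1))" for k
  have "\<bar>f (Suc k)\<bar> \<le> \<bar>x\<bar> * \<bar>f k\<bar>" for k
    unfolding f_def using abs_pade_term_Suc_le[OF assms(1), of n "k + (2 * n + 1)" x] by simp
  moreover have "\<bar>x\<bar> < 1 / 2"
    using assms(3) by simp
  moreover have "f 0 \<noteq> 0" and "\<bar>f 0\<bar> \<le> \<bar>x\<bar> ^ (2 * n + 1)"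
    using pade_term_first[OF assms(1,2)] by (simp_all add: f_def)
  ultimately show "pade_remainder q n x \<noteq> 0" and "\<bar>pade_remainder q n x\<bar> \<le> 2 * \<bar>x\<bar> ^ (2 * n + 1)"
    using suminf_ratio_bounded[of f "\<bar>x\<bar>"] unfolding pade_remainder_def f_def[symmetric] by auto
qed

section \<open>Irrationality\<close>

lemma small_fraction_bounds:
  fixes a b :: int
  assumes "a \<noteq> 0" and "b > 0" and "9 * a ^ 2 \<le> b"
  shows "of_int b * (of_int a / of_int b) ^ 2 \<le> (1 / 9 :: real)"
    and "\<bar>of_int a / of_int b :: real\<bar> \<le> 1 / 3"
proof -
  have "real_of_int (9 * a ^ 2) \<le> real_of_int b"
    using assms(3) by (simp only: of_int_le_iff)
  then have B: "(of_int b :: real) > 0" "9 * (of_int a :: real) ^ 2 \<le> of_int b"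
    using assms(2) by simp_all
  then have a2b: "of_int a ^ 2 / of_int b \<le> (1 / 9 :: real)"
    by (simp add: pos_divide_le_eq)
  moreover have "of_int b * (of_int a / of_int b) ^ 2 = (of_int a ^ 2 / of_int b :: real)"
    using B(1) by (simp add: power2_eq_square)
  ultimately show "of_int b * (of_int a / of_int b) ^ 2 \<le> (1 / 9 :: real)"
    by simp
  have "1 \<le> \<bar>a\<bar>"
    using assms(1) by simp
  then have "\<bar>a\<bar> * 1 \<le> \<bar>a\<bar> * \<bar>a\<bar>"
    by (intro mult_left_mono) auto
  then have "real_of_int \<bar>a\<bar> \<le> real_of_int (a ^ 2)"
    by (simp only: of_int_le_iff mult_1_right abs_mult_self_eq power2_eq_square)
  then have "\<bar>of_int a\<bar> / of_int b \<le> (of_int a ^ 2 / of_int b :: real)"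
    using B(1) by (intro divide_right_mono) auto
  moreover have "\<bar>of_int a / of_int b :: real\<bar> = \<bar>of_int a\<bar> / of_int b"
    using B(1) by simp
  ultimately show "\<bar>of_int a / of_int b :: real\<bar> \<le> 1 / 3"
    using a2b by linarith
qed

lemma scaled_pade_remainder_le:
  assumes "q \<ge> 2" and "x \<noteq> 0" and "\<bar>x\<bar> \<le> 1 / 3" and "B > 0"
  shows "B ^ n * \<bar>pade_remainder q n x\<bar> \<le> 2 * (B * x ^ 2) ^ n * \<bar>x\<bar>"
proof -
  have "B ^ n * \<bar>pade_remainder q n x\<bar> \<le> B ^ n * (2 * \<bar>x\<bar> ^ (2 * n + 1))"
    using pade_remainder_bounds(2)[OF assms(1-3)] assms(4) by (intro mult_left_mono) auto
  also have "\<bar>x\<bar> ^ (2 * n + 1) = (x ^ 2) ^ n * \<bar>x\<bar>"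
    by (simp add: power_add power_mult)
  finally show ?thesis
    by (simp add: power_mult_distrib mult_ac)
qed

lemma euler_qexp_small_rat_irrational:
  fixes q a b :: int
  assumes "q \<ge> 2" and "a \<noteq> 0" and "b > 0" and "9 * a ^ 2 \<le> b"
  shows "euler_qexp (of_int q) (of_int a / of_int b) \<notin> \<rat>"
proof
  define x where "x = (of_int a / of_int b :: real)"
  assume "euler_qexp (of_int q) (of_int a / of_int b) \<in> \<rat>"
  then obtain u v where "v > 0" "euler_qexp (of_int q) x = of_int u / of_int v"
    unfolding x_def by (blast elim: Rats_cases')
  then have "of_int v * euler_qexp (of_int q) (of_int a / of_int b) \<in> \<int>"
    by (simp add: x_def)
  have b_pos: "(of_int b :: real) > 0"
    using assms(3) by simp
  have bx2: "of_int b * x ^ 2 \<le> 1 / 9" and "\<bar>x\<bar> \<le> 1 / 3"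
    unfolding x_def using assms(2-4) by (rule small_fraction_bounds)+
  obtain n where n: "2 * of_int v < (9 :: real) ^ n"
    using real_arch_pow[of 9] by auto
  define Z where "Z = of_int v * of_int b ^ n * pade_remainder q n x"
  have "Z \<in> \<int>"
    unfolding Z_def x_def using assms(1,3) \<open>of_int v * euler_qexp _ _ \<in> \<int>\<close>
    by (intro Ints_pade_remainder) auto
  moreover have "x \<noteq> 0"
    using assms(2,3) by (simp add: x_def)
  then have "Z \<noteq> 0"
    using pade_remainder_bounds(1)[OF assms(1) _ \<open>\<bar>x\<bar> \<le> 1 / 3\<close>] \<open>v > 0\<close> assms(3) by (simp add: Z_def)
  moreover have "\<bar>Z\<bar> < 1"
  proof -
    have "\<bar>Z\<bar> = of_int v * (of_int b ^ n * \<bar>pade_remainder q n x\<bar>)"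
      using \<open>v > 0\<close> b_pos by (simp add: Z_def abs_mult)
    also have "\<dots> \<le> of_int v * (2 * (of_int b * x ^ 2) ^ n * \<bar>x\<bar>)"
      using scaled_pade_remainder_le[OF assms(1) \<open>x \<noteq> 0\<close> \<open>\<bar>x\<bar> \<le> 1 / 3\<close> b_pos] \<open>v > 0\<close>
      by (intro mult_left_mono) auto
    also have "\<dots> \<le> of_int v * (2 * (1 / 9) ^ n * 1)"
      using bx2 \<open>\<bar>x\<bar> \<le> 1 / 3\<close> \<open>v > 0\<close> b_pos
      by (intro mult_mono mult_left_mono power_mono) auto
    also have "\<dots> < 1"
      using n by (simp add: power_one_over field_simps)
    finally show ?thesis .
  qed
  ultimately show False
    using Ints_nonzero_abs_ge1 by fastforce
qed

lemma euler_qexp_rat_irrational_or_zero: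
  fixes q :: int and x :: real
  assumes "q \<ge> 2" and "x \<in> \<rat>" and "x \<noteq> 0"
  shows "euler_qexp (of_int q) x \<notin> \<rat> \<or> euler_qexp (of_int q) x = 0"
proof (rule disjCI)
  assume "euler_qexp (of_int q) x \<noteq> 0"
  obtain a b :: int where "b > 0" and x: "x = of_int a / of_int b"
    using assms(2) by (blast elim: Rats_cases')
  have "a \<noteq> 0"
    using assms(3) x by auto
  \<comment> \<open>m is chosen so that 9 a^2 \<le> b q^m, i.e. the Pade argument applies to x / q^m.\<close>
  define m where "m = nat (9 * a ^ 2)"
  define B where "B = b * q ^ m"
  have "9 * a ^ 2 = int m"
    by (simp add: m_def)
  also have "\<dots> < 2 ^ m"
    by (metis less_exp of_nat_less_iff of_nat_numeral of_nat_power)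
  also have "\<dots> \<le> q ^ m"
    using assms(1) by (intro power_mono) auto
  also have "\<dots> \<le> B"
    unfolding B_def using \<open>b > 0\<close> assms(1) by simp
  finally have "9 * a ^ 2 \<le> B"
    by simp
  define y where "y = (of_int a / of_int B :: real)"
  have "x = of_int q ^ m * y"
    unfolding x y_def B_def using assms(1) by (simp add: field_simps)
  then have "euler_qexp (of_int q) x = qpochhammer y (of_int q) m * euler_qexp (of_int q) y"
    using assms(1) by (simp add: euler_qexp_q_difference_power)
  moreover have "qpochhammer y (of_int q) m \<in> \<rat>"
    unfolding qpochhammer_def y_def by (intro Rats_prod) simp
  moreover have "euler_qexp (of_int q) y \<notin> \<rat>"
    unfolding y_def using assms(1) \<open>a \<noteq> 0\<close> \<open>b > 0\<close> \<open>9 * a ^ 2 \<le> B\<close>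
    by (intro euler_qexp_small_rat_irrational) (auto simp: B_def)
  ultimately show "euler_qexp (of_int q) x \<notin> \<rat>"
    using \<open>euler_qexp (of_int q) x \<noteq> 0\<close> by (metis Rats_divide mult_zero_left nonzero_mult_div_cancel_left)
qed

lemma qexp_rat_irrational_or_zero:
  fixes q :: int and z :: real
  assumes "q \<ge> 2" and "z \<in> \<rat>" and "z \<noteq> 0"
  shows "qexp (of_int q) z \<notin> \<rat> \<or> qexp (of_int q) z = 0"
  unfolding qexp_eq_euler_qexp using assms
  by (intro euler_qexp_rat_irrational_or_zero) auto

theorem corollary4p5p6:
  fixes q :: int and \<xi> :: rat
  assumes "q > 1" and "\<xi> \<noteq> 0"
  shows "(qexp (real_of_int q) (real_of_rat \<xi>) \<notin> \<rat> \<or> qexp (real_of_int q) (real_of_rat \<xi>) = 0)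
         \<and> (\<bar>\<xi>\<bar> < 1 \<longrightarrow> qexp (inverse (real_of_int q)) (real_of_rat \<xi>) \<notin> \<rat>)"
proof (intro conjI impI)
  have "q \<ge> 2"
    using assms(1) by simp
  then show "qexp (real_of_int q) (real_of_rat \<xi>) \<notin> \<rat> \<or> qexp (real_of_int q) (real_of_rat \<xi>) = 0"
    using assms(2) by (intro qexp_rat_irrational_or_zero) auto
  assume "\<bar>\<xi>\<bar> < 1"
  have "0 < 1 - inverse (real_of_int q)" and "1 - inverse (real_of_int q) \<le> 1"
    using assms(1) by (auto simp: inverse_less_1_iff)
  then have "\<bar>(1 - inverse (real_of_int q)) * real_of_rat \<xi>\<bar> \<le> \<bar>real_of_rat \<xi>\<bar>"
    by (simp add: abs_mult mult_left_le_one_le)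
  also have "\<dots> < 1"
    using \<open>\<bar>\<xi>\<bar> < 1\<close> by (metis abs_of_rat of_rat_less_1_iff)
  finally have "\<bar>(1 - inverse (real_of_int q)) * real_of_rat \<xi>\<bar> < 1" .
  then have inverse_mult:
    "qexp (inverse (real_of_int q)) (real_of_rat \<xi>) * qexp (real_of_int q) (- real_of_rat \<xi>) = 1"
    using assms(1) by (intro qexp_inverse_mult) auto
  have "qexp (real_of_int q) (- real_of_rat \<xi>) \<notin> \<rat> \<or> qexp (real_of_int q) (- real_of_rat \<xi>) = 0"
    using \<open>q \<ge> 2\<close> assms(2) by (intro qexp_rat_irrational_or_zero) auto
  then show "qexp (inverse (real_of_int q)) (real_of_rat \<xi>) \<notin> \<rat>"
    using inverse_mult by (metis Rats_inverse inverse_unique mult_zero_right zero_neq_one)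
qed

end
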